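(* Let $\gamma>0$ and let $\mathcal Q$ be a collection of probability measures on $\{0,1\}^{\mathbb N}$ such that $\mathrm{Mean}(\mathcal Q)$ has no countable $3\gamma$-cover. Then there exist a coordinate $i\in\mathbb N$, a value $r_i\in(0,1)$, and subcollections $\mathcal Q_1,\mathcal Q_2\subseteq\mathcal Q$ such that neither $\mathrm{Mean}(\mathcal Q_1)$ nor $\mathrm{Mean}(\mathcal Q_2)$ has a countable $3\gamma$-cover, every $q\in\mathrm{Mean}(\mathcal Q_1)$ satisfies $q_i\ge r_i+\gamma$, and every $q\in\mathrm{Mean}(\mathcal Q_2)$ satisfies $q_i\le r_i-\gamma$.
   Context: For a probability measure $\mu$ on $\{0,1\}^{\mathbb N}$, $\mathrm{Mean}(\mu)\in[0,1]^{\mathbb N}$ is the vector whose $j$-th coordinate is $\mathbb E[X_j]$ for $X\sim\mu$; $\mathrm{Mean}(\mathcal Q)=\{\mathrm{Mean}(\mu):\mu\in\mathcal Q\}$. For $\varepsilon>0$, a countable $\varepsilon$-cover of $\mathrm{Mean}(\mathcal Q)$ is a countable set $C\subset[0,1]^{\mathbb N}$ such that every $q\in\mathrm{Mean}(\mathcal Q)$ has some $p\in C$ with $\|q-p\|_\infty<\varepsilon$. *)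

theory Defs
  imports "HOL-Probability.Probability"
begin

text \<open>The measurable space {0,1}^N with the product sigma-algebra; bits are modelled as bool
  (True = 1).\<close>
definition cantor_space :: "(nat \<Rightarrow> bool) measure" where
  "cantor_space = PiM UNIV (\<lambda>_::nat. count_space (UNIV :: bool set))"

definition prob_measure_on_cantor :: "(nat \<Rightarrow> bool) measure \<Rightarrow> bool" where
  "prob_measure_on_cantor M \<longleftrightarrow> prob_space M \<and> sets M = sets cantor_space"

definition Mean :: "(nat \<Rightarrow> bool) measure \<Rightarrow> (nat \<Rightarrow> real)" where
  "Mean M = (\<lambda>j. integral\<^sup>L M (\<lambda>x. if x j then 1 else 0))"

definition MeanSet :: "(nat \<Rightarrow> bool) measure set \<Rightarrow> (nat \<Rightarrow> real) set" where
  "MeanSet Q = Mean ` Q"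

definition sup_dist :: "(nat \<Rightarrow> real) \<Rightarrow> (nat \<Rightarrow> real) \<Rightarrow> real" where
  "sup_dist q p = (SUP j. \<bar>q j - p j\<bar>)"

definition has_countable_cover :: "real \<Rightarrow> (nat \<Rightarrow> real) set \<Rightarrow> bool" where
  "has_countable_cover \<epsilon> S \<longleftrightarrow>
     (\<exists>C. countable C \<and> C \<subseteq> {p. \<forall>j. p j \<in> {0..1}} \<and>
          (\<forall>q\<in>S. \<exists>p\<in>C. sup_dist q p < \<epsilon>))"

end

theory Submission
  imports Defs
begin

text \<open>Otherwise, for every coordinate i and every r in (0,1) one of the two slabs
  q_i \<le> r - \<gamma> and q_i \<ge> r + \<gamma> of mean vectors has a countable cover. The lower slabs grow
  with r, so for each i there is a threshold t_i below which they are coverable; above it they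
  are not, so there the upper slabs are. A mean vector q with |q_i - t_i| > \<gamma> lies in one of
  these coverable slabs for a rational r strictly between t_i and q_i \<plusminus> \<gamma>, and all other mean
  vectors are within \<gamma> of the single point t. Countably many countable covers then cover all
  mean vectors, a contradiction; only 3\<gamma> > \<gamma> is used.\<close>

lemma has_countable_cover_subset:
  assumes "A \<subseteq> B" "has_countable_cover \<epsilon> B"
  shows "has_countable_cover \<epsilon> A"
  using assms unfolding has_countable_cover_def by (meson subsetD)

lemma has_countable_cover_UN:
  assumes "countable K" "\<And>k. k \<in> K \<Longrightarrow> has_countable_cover \<epsilon> (A k)"
  shows "has_countable_cover \<epsilon> (\<Union>k\<in>K. A k)"
proof -
  have "\<forall>k\<in>K. \<exists>C. countable C \<and> C \<subseteq> {p. \<forall>j. p j \<in> {0..1}} \<and>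
      (\<forall>q\<in>A k. \<exists>p\<in>C. sup_dist q p < \<epsilon>)"
    by (intro ballI assms(2)[unfolded has_countable_cover_def])
  from bchoice[OF this] obtain C where C: "\<forall>k\<in>K. countable (C k) \<and>
      C k \<subseteq> {p. \<forall>j. p j \<in> {0..1}} \<and> (\<forall>q\<in>A k. \<exists>p\<in>C k. sup_dist q p < \<epsilon>)"
    by blast
  have "countable (\<Union>k\<in>K. C k)"
    using assms(1) C by (intro countable_UN) auto
  moreover have "(\<Union>k\<in>K. C k) \<subseteq> {p. \<forall>j. p j \<in> {0..1}}"
    using C by (intro UN_least) auto
  moreover have "\<exists>p\<in>(\<Union>k\<in>K. C k). sup_dist q p < \<epsilon>" if "q \<in> (\<Union>k\<in>K. A k)" for q
    using that C by fast
  ultimately show ?thesis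
    unfolding has_countable_cover_def by (intro exI[of _ "\<Union>k\<in>K. C k"] conjI ballI)
qed

lemma has_countable_cover_Un:
  assumes "has_countable_cover \<epsilon> A" "has_countable_cover \<epsilon> B"
  shows "has_countable_cover \<epsilon> (A \<union> B)"
  using has_countable_cover_UN[of "{A, B}" \<epsilon> id] assms by auto

lemma has_countable_cover_near_point:
  assumes "\<forall>j. p j \<in> {0..1}" "\<gamma> < \<epsilon>" "\<And>q j. q \<in> A \<Longrightarrow> \<bar>q j - p j\<bar> \<le> \<gamma>"
  shows "has_countable_cover \<epsilon> A"
proof -
  have "sup_dist q p < \<epsilon>" if "q \<in> A" for q
  proof -
    have "sup_dist q p \<le> \<gamma>"
      unfolding sup_dist_def using assms(3)[OF that] by (intro cSUP_least) auto
    then show ?thesis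
      using assms(2) by linarith
  qed
  then show ?thesis
    unfolding has_countable_cover_def using assms(1) by (intro exI[of _ "{p}"]) simp
qed

lemma Mean_in_unit_interval:
  assumes "prob_measure_on_cantor M"
  shows "Mean M j \<in> {0..1}"
proof -
  interpret prob_space M
    using assms unfolding prob_measure_on_cantor_def by simp
  have "0 \<le> Mean M j"
    unfolding Mean_def by (rule integral_nonneg_AE) auto
  moreover have "Mean M j \<le> 1"
  proof (cases "integrable M (\<lambda>x. if x j then 1 else 0 :: real)")
    case True
    then show ?thesis
      unfolding Mean_def by (rule integral_le_const) auto
  next
    case False
    then show ?thesis
      unfolding Mean_def by (simp add: not_integrable_integral_eq)
  qed
  ultimately show ?thesis
    by simp
qed

lemma upward_closed_threshold:
  fixes B :: "real \<Rightarrow> bool"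
  assumes "\<And>r s. B r \<Longrightarrow> r \<le> s \<Longrightarrow> B s"
  obtains t where "t \<in> {0..1}"
    "\<And>r. r \<in> {0<..<1} \<Longrightarrow> r < t \<Longrightarrow> \<not> B r"
    "\<And>r. r \<in> {0<..<1} \<Longrightarrow> t < r \<Longrightarrow> B r"
proof
  define T where "T = {r \<in> {0<..<1}. B r} \<union> {1}"
  have T: "T \<noteq> {}" "bdd_below T"
    unfolding T_def by (auto intro: bdd_belowI[of _ 0])
  show "Inf T \<in> {0..1}"
    using T by (auto intro: cInf_lower cInf_greatest simp: T_def)
  show "\<not> B r" if "r \<in> {0<..<1}" "r < Inf T" for r
    using that cInf_lower[OF _ T(2), of r] by (auto simp: T_def)
  show "B r" if "r \<in> {0<..<1}" "Inf T < r" for r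
  proof -
    obtain s where "s \<in> T" "s < r"
      using \<open>Inf T < r\<close> cInf_less_iff[OF T] by blast
    then show ?thesis
      using that assms[of s r] by (auto simp: T_def)
  qed
qed

lemma not_has_countable_cover_split:
  fixes S :: "(nat \<Rightarrow> real) set"
  assumes "0 \<le> \<gamma>" "\<gamma> < \<epsilon>" "\<And>q j. q \<in> S \<Longrightarrow> q j \<in> {0..1}"
    and "\<not> has_countable_cover \<epsilon> S"
  shows "\<exists>i r. r \<in> {0<..<1} \<and>
           \<not> has_countable_cover \<epsilon> {q \<in> S. q i \<ge> r + \<gamma>} \<and>
           \<not> has_countable_cover \<epsilon> {q \<in> S. q i \<le> r - \<gamma>}"
proof (rule ccontr)
  define L where "L i r = {q \<in> S. q i \<le> r - \<gamma>}" for i r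
  define U where "U i r = {q \<in> S. q i \<ge> r + \<gamma>}" for i r
  assume "\<not> ?thesis"
  then have L_or_U: "has_countable_cover \<epsilon> (L i r) \<or> has_countable_cover \<epsilon> (U i r)"
    if "r \<in> {0<..<1}" for i r
    using that unfolding L_def U_def by blast
  have "\<exists>t \<in> {0..1}. \<forall>r \<in> {0<..<1}.
      (r < t \<longrightarrow> has_countable_cover \<epsilon> (L i r)) \<and> (t < r \<longrightarrow> has_countable_cover \<epsilon> (U i r))" for i
  proof -
    have "\<not> has_countable_cover \<epsilon> (L i s)" if "\<not> has_countable_cover \<epsilon> (L i r)" "r \<le> s" for r s
      using that has_countable_cover_subset[of "L i r" "L i s"] by (force simp: L_def)
    then obtain t where "t \<in> {0..1}"
      "\<And>r. r \<in> {0<..<1} \<Longrightarrow> r < t \<Longrightarrow> has_countable_cover \<epsilon> (L i r)"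
      "\<And>r. r \<in> {0<..<1} \<Longrightarrow> t < r \<Longrightarrow> \<not> has_countable_cover \<epsilon> (L i r)"
      by (rule upward_closed_threshold[where B = "\<lambda>r. \<not> has_countable_cover \<epsilon> (L i r)"]) blast+
    then show ?thesis
      using L_or_U by blast
  qed
  then obtain t where t: "\<And>i. t i \<in> {0..1}"
    "\<And>i r. r \<in> {0<..<1} \<Longrightarrow> r < t i \<Longrightarrow> has_countable_cover \<epsilon> (L i r)"
    "\<And>i r. r \<in> {0<..<1} \<Longrightarrow> t i < r \<Longrightarrow> has_countable_cover \<epsilon> (U i r)"
    by metis
  define K where "K = {(i, r). r \<in> \<rat> \<inter> {0<..<1} \<and> r \<noteq> t i}"
  define slab where "slab = (\<lambda>(i, r). if r < t i then L i r else U i r)"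
  have "S \<subseteq> (\<Union>k\<in>K. slab k) \<union> {q \<in> S. \<forall>j. \<bar>q j - t j\<bar> \<le> \<gamma>}"
  proof
    fix q assume "q \<in> S"
    show "q \<in> (\<Union>k\<in>K. slab k) \<union> {q \<in> S. \<forall>j. \<bar>q j - t j\<bar> \<le> \<gamma>}"
    proof (cases "\<forall>j. \<bar>q j - t j\<bar> \<le> \<gamma>")
      case False
      then obtain i where "\<gamma> < \<bar>q i - t i\<bar>"
        by (auto simp: not_le)
      then have "q i + \<gamma> < t i \<or> t i < q i - \<gamma>"
        by arith
      then obtain r where "r \<in> \<rat>" "q i + \<gamma> < r \<and> r < t i \<or> t i < r \<and> r < q i - \<gamma>"
        by (meson Rats_dense_in_real)
      moreover have "q i \<in> {0..1}" "t i \<in> {0..1}"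
        using assms(3) \<open>q \<in> S\<close> t(1) by auto
      ultimately have "(i, r) \<in> K" "q \<in> slab (i, r)"
        using assms(1) \<open>q \<in> S\<close> unfolding K_def slab_def L_def U_def by auto
      then show ?thesis
        by blast
    qed (use \<open>q \<in> S\<close> in blast)
  qed
  moreover have "has_countable_cover \<epsilon> (\<Union>k\<in>K. slab k)"
  proof (rule has_countable_cover_UN)
    have "K \<subseteq> UNIV \<times> \<rat>"
      unfolding K_def by auto
    then show "countable K"
      by (rule countable_subset) (simp add: countable_rat)
    show "has_countable_cover \<epsilon> (slab k)" if "k \<in> K" for k
      using that t(2,3) unfolding K_def slab_def by (auto simp: neq_iff)
  qed
  moreover have "has_countable_cover \<epsilon> {q \<in> S. \<forall>j. \<bar>q j - t j\<bar> \<le> \<gamma>}"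
    using t(1) assms(2) by (intro has_countable_cover_near_point[where p = t]) auto
  ultimately have "has_countable_cover \<epsilon> S"
    by (meson has_countable_cover_Un has_countable_cover_subset)
  with assms(4) show False ..
qed

theorem mainTheorem11:
  fixes \<gamma> :: real and Q :: "(nat \<Rightarrow> bool) measure set"
  assumes "\<gamma> > 0"
    and "\<forall>M\<in>Q. prob_measure_on_cantor M"
    and "\<not> has_countable_cover (3 * \<gamma>) (MeanSet Q)"
  shows "\<exists>(i::nat) (r::real) Q1 Q2. r \<in> {0<..<1} \<and> Q1 \<subseteq> Q \<and> Q2 \<subseteq> Q \<and>
           \<not> has_countable_cover (3 * \<gamma>) (MeanSet Q1) \<and>
           \<not> has_countable_cover (3 * \<gamma>) (MeanSet Q2) \<and>
           (\<forall>q\<in>MeanSet Q1. q i \<ge> r + \<gamma>) \<and>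
           (\<forall>q\<in>MeanSet Q2. q i \<le> r - \<gamma>)"
proof -
  have "\<exists>i r. r \<in> {0<..<1} \<and>
      \<not> has_countable_cover (3 * \<gamma>) {q \<in> MeanSet Q. q i \<ge> r + \<gamma>} \<and>
      \<not> has_countable_cover (3 * \<gamma>) {q \<in> MeanSet Q. q i \<le> r - \<gamma>}"
  proof (rule not_has_countable_cover_split)
    show "q j \<in> {0..1}" if "q \<in> MeanSet Q" for q j
      using that assms(2) Mean_in_unit_interval unfolding MeanSet_def by blast
  qed (use assms(1,3) in auto)
  then obtain i r where "r \<in> {0<..<1}"
    and "\<not> has_countable_cover (3 * \<gamma>) {q \<in> MeanSet Q. q i \<ge> r + \<gamma>}"
    and "\<not> has_countable_cover (3 * \<gamma>) {q \<in> MeanSet Q. q i \<le> r - \<gamma>}"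
    by blast
  moreover have "{q \<in> MeanSet Q. q i \<ge> r + \<gamma>} = MeanSet {M \<in> Q. Mean M i \<ge> r + \<gamma>}"
    and "{q \<in> MeanSet Q. q i \<le> r - \<gamma>} = MeanSet {M \<in> Q. Mean M i \<le> r - \<gamma>}"
    unfolding MeanSet_def by auto
  moreover have "\<forall>q\<in>MeanSet {M \<in> Q. Mean M i \<ge> r + \<gamma>}. q i \<ge> r + \<gamma>"
    and "\<forall>q\<in>MeanSet {M \<in> Q. Mean M i \<le> r - \<gamma>}. q i \<le> r - \<gamma>"
    unfolding MeanSet_def by auto
  ultimately show ?thesis
    by (metis (no_types, lifting) mem_Collect_eq subsetI)
qed

end
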